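(* Under the standing assumptions, writing (R2) for the condition $\mathscr{R}(CC^*B^* )=\mathscr{R}(B^* )$, the following hold. (41) $\{M^{(1,2,4)}\}\subseteq\{C^{-1}B^{(1)}A^{-1}\}$; and $\{M^{(1,2,4)}\}\supseteq\{C^{-1}B^{(1)}A^{-1}\}\Leftrightarrow\{M^{(1,2,4)}\}=\{C^{-1}B^{(1)}A^{-1}\}\Leftrightarrow r(B)=n$. (42) $\{M^{(1,2,4)}\}\subseteq\{C^{-1}B^{(1,2)}A^{-1}\}$; and $\{M^{(1,2,4)}\}\supseteq\{C^{-1}B^{(1,2)}A^{-1}\}\Leftrightarrow\{M^{(1,2,4)}\}=\{C^{-1}B^{(1,2)}A^{-1}\}\Leftrightarrow B=0$ or $r(B)=n$. (43) $\{M^{(1,2,4)}\}\cap\{C^{-1}B^{(1,3)}A^{-1}\}\neq\emptyset$; $\{M^{(1,2,4)}\}\supseteq\{C^{-1}B^{(1,3)}A^{-1}\}\Leftrightarrow r(B)=n$; $\{M^{(1,2,4)}\}\subseteq\{C^{-1}B^{(1,3)}A^{-1}\}\Leftrightarrow B=0$ or $r(B)=m$; $\{M^{(1,2,4)}\}=\{C^{-1}B^{(1,3)}A^{-1}\}\Leftrightarrow r(B)=m=n$. (44) $\{M^{(1,2,4)}\}\cap\{C^{-1}B^{(1,4)}A^{-1}\}\neq\emptyset\Leftrightarrow\{M^{(1,2,4)}\}\subseteq\{C^{-1}B^{(1,4)}A^{-1}\}\Leftrightarrow$ (R2); and $\{M^{(1,2,4)}\}\supseteq\{C^{-1}B^{(1,4)}A^{-1}\}\Leftrightarrow\{M^{(1,2,4)}\}=\{C^{-1}B^{(1,4)}A^{-1}\}\Leftrightarrow$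 (R2) and $r(B)=\min\{m,n\}$. (45) $\{M^{(1,2,4)}\}\cap\{C^{-1}B^{(1,2,3)}A^{-1}\}\neq\emptyset$; $\{M^{(1,2,4)}\}\supseteq\{C^{-1}B^{(1,2,3)}A^{-1}\}\Leftrightarrow B=0$ or $r(B)=n$; $\{M^{(1,2,4)}\}\subseteq\{C^{-1}B^{(1,2,3)}A^{-1}\}\Leftrightarrow B=0$ or $r(B)=m$; $\{M^{(1,2,4)}\}=\{C^{-1}B^{(1,2,3)}A^{-1}\}\Leftrightarrow B=0$ or $r(B)=m=n$. (46) $\{M^{(1,2,4)}\}\cap\{C^{-1}B^{(1,2,4)}A^{-1}\}\neq\emptyset\Leftrightarrow\{M^{(1,2,4)}\}=\{C^{-1}B^{(1,2,4)}A^{-1}\}\Leftrightarrow$ (R2). (47) $\{M^{(1,2,4)}\}\cap\{C^{-1}B^{(1,3,4)}A^{-1}\}\neq\emptyset\Leftrightarrow$ (R2); $\{M^{(1,2,4)}\}\supseteq\{C^{-1}B^{(1,3,4)}A^{-1}\}\Leftrightarrow$ (R2) and $r(B)=\min\{m,n\}$; $\{M^{(1,2,4)}\}\subseteq\{C^{-1}B^{(1,3,4)}A^{-1}\}\Leftrightarrow B=0$ or ((R2) and $r(B)=m$); $\{M^{(1,2,4)}\}=\{C^{-1}B^{(1,3,4)}A^{-1}\}\Leftrightarrow$ (R2) and $r(B)=m$. (48) $C^{-1}B^\dagger A^{-1}\in\{M^{(1,2,4)}\}\Leftrightarrow$ (R2).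
   Context: Standing assumptions: $m,n\ge1$; $A\in\mathbb{C}^{m\times m}$ and $C\in\mathbb{C}^{n\times n}$ are nonsingular; $B\in\mathbb{C}^{m\times n}$; $M=ABC$. For a complex matrix $X$, $X^*$ is its conjugate transpose, $r(X)$ its rank and $\mathscr{R}(X)$ its column space. For $X\in\mathbb{C}^{p\times q}$, a matrix $G\in\mathbb{C}^{q\times p}$ is called an $\{i,\ldots,j\}$-generalized inverse of $X$ (written $X^{(i,\ldots,j)}$) if it satisfies the equations numbered $i,\ldots,j$ among the four Penrose equations (i) $XGX=X$, (ii) $GXG=G$, (iii) $(XG)^*=XG$, (iv) $(GX)^*=GX$; $\{X^{(i,\ldots,j)}\}$ denotes the set of all such $G$. The Moore–Penrose inverse $X^\dagger$ is the unique matrix satisfying all four equations. For a type $(k,\ldots,l)$, $\{C^{-1}B^{(k,\ldots,l)}A^{-1}\}:=\{C^{-1}GA^{-1}: G\in\{B^{(k,\ldots,l)}\}\}$. *)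

theory Defs
  imports "HOL-Analysis.Analysis"
begin

text \<open>Complex matrices are represented as \<open>complex^'n^'m\<close> (m rows, n columns);
  m = CARD('m), n = CARD('n).\<close>

definition cstar :: "complex^'n^'m \<Rightarrow> complex^'m^'n" where
  "cstar X = (\<chi> i j. cnj (X $ j $ i))"

definition colspace :: "complex^'n^'m \<Rightarrow> (complex^'m) set" where
  "colspace X = range (\<lambda>x. X *v x)"

definition gen_inv :: "nat set \<Rightarrow> complex^'n^'m \<Rightarrow> (complex^'m^'n) set" where
  "gen_inv S X = {G.
     (1 \<in> S \<longrightarrow> X ** G ** X = X) \<and>
     (2 \<in> S \<longrightarrow> G ** X ** G = G) \<and>
     (3 \<in> S \<longrightarrow> cstar (X ** G) = X ** G) \<and>
     (4 \<in> S \<longrightarrow> cstar (G ** X) = G ** X)}"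

definition moore_penrose :: "complex^'n^'m \<Rightarrow> complex^'m^'n" where
  "moore_penrose X = (THE G. G \<in> gen_inv {1,2,3,4} X)"

definition tri_set :: "complex^'m^'m \<Rightarrow> nat set \<Rightarrow> complex^'n^'m \<Rightarrow> complex^'n^'n \<Rightarrow> (complex^'m^'n) set" where
  "tri_set A S B C = (\<lambda>G. matrix_inv C ** G ** matrix_inv A) ` gen_inv S B"

end

theory Submission
  imports Defs
begin

text \<open>Writing \<open>X = CGA\<close>, \<open>G\<close> is a \<open>{1,2,4}\<close>-inverse of \<open>M = ABC\<close> iff \<open>X\<close> is a
  \<open>{1,2}\<close>-inverse of \<open>B\<close> with \<open>C\<^sup>-\<^sup>1XBC\<close> Hermitian. Hermitian matrices \<open>C\<^sup>-\<^sup>1XBC\<close> of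
  this kind absorb each other and hence coincide, so all such \<open>X\<close> share one idempotent \<open>P = XB\<close>.
  Each comparison with a class \<open>{B\<^sup>(\<^sup>S\<^sup>)}\<close> then reduces to two questions. Is \<open>P\<close> Hermitian?
  This holds iff \<open>CC\<^sup>*\<close> commutes with the orthogonal projector \<open>B\<^sup>\<dagger>B\<close> onto \<open>\<R>(B\<^sup>*)\<close>, i.e. iff
  \<open>\<R>(CC\<^sup>*B\<^sup>*) = \<R>(B\<^sup>*)\<close>. Can a generalized inverse be perturbed inside the class by a term
  that \<open>B\<close> annihilates on one side? This is possible exactly when \<open>B\<close> is not left, resp. right,
  invertible, i.e. when \<open>r(B) \<noteq> n\<close>, resp. \<open>r(B) \<noteq> m\<close>.\<close>

lemma cstar_cstar [simp]: "cstar (cstar X) = X"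
  by (simp add: cstar_def vec_eq_iff)

lemma cstar_mult: "cstar (X ** Y) = cstar Y ** cstar X"
  by (simp add: cstar_def matrix_matrix_mult_def vec_eq_iff mult.commute)

lemma cstar_add: "cstar (X + Y) = cstar X + cstar Y"
  by (simp add: cstar_def vec_eq_iff)

lemma cstar_diff: "cstar (X - Y) = cstar X - cstar Y"
  by (simp add: cstar_def vec_eq_iff)

lemma cstar_zero [simp]: "cstar 0 = 0"
  by (simp add: cstar_def vec_eq_iff)

lemma cstar_mat_1 [simp]: "cstar (mat 1) = mat 1"
  by (simp add: cstar_def vec_eq_iff mat_def)

lemma cstar_mult_self_eq_zero_iff: "cstar X ** X = 0 \<longleftrightarrow> X = 0"
proof
  assume XX: "cstar X ** X = 0"
  have "X $ k $ j = 0" for k j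
  proof -
    have "complex_of_real (\<Sum>k\<in>UNIV. (norm (X $ k $ j))\<^sup>2) = (cstar X ** X) $ j $ j"
      unfolding of_real_sum complex_norm_square
      by (simp add: cstar_def matrix_matrix_mult_def mult.commute)
    then have "complex_of_real (\<Sum>k\<in>UNIV. (norm (X $ k $ j))\<^sup>2) = 0"
      unfolding XX zero_index .
    then have "(\<Sum>k\<in>UNIV. (norm (X $ k $ j))\<^sup>2) = 0"
      by (simp only: of_real_eq_0_iff)
    then show ?thesis
      by (simp add: sum_nonneg_eq_0_iff)
  qed
  then show "X = 0"
    by (simp add: vec_eq_iff)
qed simp

lemma cstar_mult_cancel_left: "cstar X ** X ** Y = 0 \<Longrightarrow> X ** Y = 0"
  by (metis cstar_mult cstar_mult_self_eq_zero_iff matrix_mul_assoc times0_right)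

lemma hermitian_eqI:
  assumes "P ** Q = P" "Q ** P = Q" "cstar P = P" "cstar Q = Q"
  shows "P = Q"
  by (metis assms cstar_mult)

lemma hermitian_similar_imp_commute:
  fixes C Ci P :: "complex^'n^'n"
  assumes "C ** Ci = mat 1" "Ci ** C = mat 1" "cstar (Ci ** P ** C) = Ci ** P ** C"
  shows "C ** cstar C ** cstar P = P ** (C ** cstar C)"
proof -
  have "cstar Ci ** cstar C = mat 1"
    using assms(1) by (metis cstar_mult cstar_mat_1)
  then have "C ** cstar C ** cstar P = C ** (cstar C ** cstar P ** cstar Ci) ** cstar C"
    by (metis matrix_mul_assoc matrix_mul_rid)
  also have "\<dots> = C ** (Ci ** P ** C) ** cstar C"
    using assms(3) by (simp add: cstar_mult matrix_mul_assoc)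
  also have "\<dots> = P ** (C ** cstar C)"
    using assms(1) by (metis matrix_mul_assoc matrix_mul_lid)
  finally show ?thesis .
qed

lemma matrix_mult_diff_left: "(A::'a::ring_1^'n^'m) ** (B - C) = A ** B - A ** C"
  by (vector matrix_matrix_mult_def sum_subtractf[symmetric] field_simps)

lemma matrix_mult_diff_right: "((A::'a::ring_1^'n^'m) - B) ** C = A ** C - B ** C"
  by (vector matrix_matrix_mult_def sum_subtractf[symmetric] field_simps)

lemma matrix_mult_add_right: "((A::'a::semiring_1^'n^'m) + B) ** C = A ** C + B ** C"
  by (vector matrix_matrix_mult_def sum.distrib[symmetric] field_simps)

lemma matrix_mul_right_inverse_cancel: "A ** Ai = mat 1 \<Longrightarrow> X ** A ** Ai = X"
  by (simp flip: matrix_mul_assoc)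

lemma invertible_sandwich_cancel:
  fixes A :: "'a::semiring_1^'m^'k"
  assumes "Ai ** A = mat 1" "C ** Ci = mat 1"
  shows "A ** X ** C = A ** Y ** C \<longleftrightarrow> X = Y"
proof
  assume "A ** X ** C = A ** Y ** C"
  then have "Ai ** (A ** X ** C) ** Ci = Ai ** (A ** Y ** C) ** Ci"
    by simp
  then show "X = Y"
    using assms by (metis matrix_mul_assoc matrix_mul_lid matrix_mul_rid)
qed simp

lemma matrix_inv_right: "invertible A \<Longrightarrow> A ** matrix_inv A = mat 1"
  and matrix_inv_left: "invertible A \<Longrightarrow> matrix_inv A ** A = mat 1"
  unfolding invertible_def matrix_inv_def by (metis (mono_tags, lifting) someI_ex)+

lemma ex_mult_mult_neq_zero:
  fixes J :: "'a::field^'k^'i" and K :: "'a^'l^'j"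
  assumes "J \<noteq> 0" "K \<noteq> 0"
  shows "\<exists>W. J ** W ** K \<noteq> 0"
proof -
  obtain i k where ik: "J $ i $ k \<noteq> 0"
    using assms(1) by (metis vec_eq_iff zero_index)
  obtain j l where jl: "K $ j $ l \<noteq> 0"
    using assms(2) by (metis vec_eq_iff zero_index)
  define W :: "'a^'j^'k" where "W = (\<chi> a b. if a = k \<and> b = j then 1 else 0)"
  have JW: "(J ** W) $ i $ b = (if b = j then J $ i $ k else 0)" for b
    by (simp add: W_def matrix_matrix_mult_def if_distrib cong: if_cong)
  have "(J ** W ** K) $ i $ l = (\<Sum>b\<in>UNIV. (J ** W) $ i $ b * K $ b $ l)"
    by (simp only: matrix_matrix_mult_def vec_lambda_beta)
  also have "\<dots> = (\<Sum>b\<in>UNIV. if b = j then J $ i $ k * K $ b $ l else 0)"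
    by (rule sum.cong) (simp_all add: JW)
  also have "\<dots> = J $ i $ k * K $ j $ l"
    by simp
  finally have "J ** W ** K \<noteq> 0"
    using ik jl by (metis mult_eq_0_iff zero_index)
  then show ?thesis ..
qed

lemma colspace_mult_subset: "colspace (X ** Y) \<subseteq> colspace X"
  unfolding colspace_def by (auto simp flip: matrix_vector_mul_assoc)

lemma colspace_subset_imp_fixed:
  assumes "E ** Y = Y" "colspace X \<subseteq> colspace Y"
  shows "E ** X = X"
  unfolding matrix_eq
proof
  fix x
  obtain y where "X *v x = Y *v y"
    using assms(2) unfolding colspace_def by auto
  then show "(E ** X) *v x = X *v x"
    by (metis assms(1) matrix_vector_mul_assoc)
qed

lemma colspace_mult_eq_iff_commute:
  fixes S Si E :: "complex^'n^'n" and Y :: "complex^'m^'n"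
  assumes S: "S ** Si = mat 1" "Si ** S = mat 1" "cstar S = S"
    and E: "cstar E = E" "E ** Y = Y" "E = Y ** Z"
  shows "colspace (S ** Y) = colspace Y \<longleftrightarrow> S ** E = E ** S"
proof
  assume "colspace (S ** Y) = colspace Y"
  then have "E ** (S ** Y) = S ** Y"
    using colspace_subset_imp_fixed[OF E(2)] by blast
  then have ESE: "E ** S ** E = S ** E"
    using E(3) by (metis matrix_mul_assoc)
  have "E ** S = cstar (S ** E)"
    using S(3) E(1) by (simp add: cstar_mult)
  also have "\<dots> = cstar (E ** S ** E)"
    by (simp only: ESE)
  also have "\<dots> = E ** S ** E"
    using S(3) E(1) by (simp add: cstar_mult matrix_mul_assoc)
  finally show "S ** E = E ** S"
    using ESE by simp
next
  assume comm: "S ** E = E ** S"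
  have "S ** Y = Y ** (Z ** S ** Y)"
    by (metis E(2,3) comm matrix_mul_assoc)
  then have "colspace (S ** Y) \<subseteq> colspace Y"
    using colspace_mult_subset by metis
  moreover have "Si ** E = E ** Si"
    by (metis S(1,2) comm matrix_mul_assoc matrix_mul_lid matrix_mul_rid)
  then have "Y = S ** Y ** (Z ** Si ** Y)"
    by (metis E(2,3) S(1) matrix_mul_assoc matrix_mul_lid)
  then have "colspace Y \<subseteq> colspace (S ** Y)"
    using colspace_mult_subset by metis
  ultimately show "colspace (S ** Y) = colspace Y"
    by blast
qed

lemma rank_zero [simp]: "rank (0::'a::field^'n^'m) = 0"
proof -
  have "rows (0::'a^'n^'m) = {0}"
    by (auto simp: rows_def row_def zero_vec_def)
  then show ?thesis
    by (simp add: row_rank_def_gen)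
qed

lemma rank_le_ncols: "rank (B::'a::field^'n^'m) \<le> CARD('n)"
  unfolding row_rank_def_gen by (rule dim_subset_UNIV_cart_gen)

lemma rank_le_nrows: "rank (B::'a::field^'n^'m) \<le> CARD('m)"
proof -
  have rows: "rows B = range (\<lambda>i. row i B)"
    unfolding rows_def by auto
  have "vec.dim (rows B) \<le> card (rows B)"
    by (rule vec.dim_le_card) (auto simp: rows vec.span_base)
  also have "\<dots> \<le> CARD('m)"
    unfolding rows by (rule card_image_le) simp
  finally show ?thesis
    unfolding row_rank_def_gen .
qed

lemma rank_eq_ncols_iff: "rank (B::'a::field^'n^'m) = CARD('n) \<longleftrightarrow> (\<exists>L. L ** B = mat 1)"
  unfolding row_rank_def_gen matrix_left_invertible_span_rows_gen
  by (simp add: vec.dim_eq_full[symmetric] card_cart_basis vec.dimension_def)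

lemma independent_range_iff:
  fixes f :: "'i::finite \<Rightarrow> 'a::field^'n"
  assumes "inj f"
  shows "vec.independent (range f) \<longleftrightarrow> (\<forall>c. (\<Sum>i\<in>UNIV. c i *s f i) = 0 \<longrightarrow> (\<forall>i. c i = 0))"
proof -
  have reindex: "(\<Sum>v\<in>range f. u v *s v) = (\<Sum>i\<in>UNIV. u (f i) *s f i)" for u
    using sum.reindex[OF assms, of "\<lambda>v. u v *s v"] by simp
  show ?thesis
  proof (intro iffI allI impI)
    fix c i
    assume indep: "vec.independent (range f)" and c: "(\<Sum>i\<in>UNIV. c i *s f i) = 0"
    have "(\<Sum>v\<in>range f. c (inv f v) *s v) = 0"
      unfolding reindex inv_f_f[OF assms] by (rule c)
    then have "\<forall>v\<in>range f. c (inv f v) = 0"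
      using indep unfolding vec.independent_explicit by (blast dest: spec[of _ "\<lambda>v. c (inv f v)"])
    then show "c i = 0"
      using inv_f_f[OF assms] by (metis rangeI)
  next
    assume "\<forall>c. (\<Sum>i\<in>UNIV. c i *s f i) = 0 \<longrightarrow> (\<forall>i. c i = 0)"
    then have "\<forall>u. (\<Sum>i\<in>UNIV. u (f i) *s f i) = 0 \<longrightarrow> (\<forall>v\<in>range f. u v = 0)"
      by auto
    then show "vec.independent (range f)"
      unfolding vec.independent_explicit reindex by simp
  qed
qed

lemma rank_eq_nrows_iff: "rank (B::'a::field^'n^'m) = CARD('m) \<longleftrightarrow> (\<exists>R. B ** R = mat 1)"
proof -
  define f where "f i = row i B" for i
  have rank: "rank B = vec.dim (range f)"
    unfolding row_rank_def_gen rows_def f_def by (simp add: full_SetCompr_eq)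
  have invertible_iff: "(\<exists>R. B ** R = mat 1) \<longleftrightarrow> (\<forall>c. (\<Sum>i\<in>UNIV. c i *s f i) = 0 \<longrightarrow> (\<forall>i. c i = 0))"
    unfolding f_def by (rule matrix_right_invertible_independent_rows)
  have card_le: "card (range f) \<le> CARD('m)"
    by (rule card_image_le) simp
  show ?thesis
  proof
    assume "rank B = CARD('m)"
    moreover have "vec.dim (range f) \<le> card (range f)"
      by (rule vec.dim_le_card) (auto simp: vec.span_base)
    ultimately have card: "card (range f) = CARD('m)"
      using rank card_le by linarith
    then have "inj f"
      by (simp add: eq_card_imp_inj_on)
    moreover have "vec.independent (range f)"
      using vec.card_eq_dim[of "range f" "range f"] card \<open>rank B = CARD('m)\<close> rank
      by (simp add: vec.span_superset)
    ultimately show "\<exists>R. B ** R = mat 1"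
      unfolding invertible_iff by (simp add: independent_range_iff)
  next
    assume "\<exists>R. B ** R = mat 1"
    then obtain R where R: "B ** R = mat 1" ..
    have "inj f"
    proof (rule injI)
      fix i j
      assume "f i = f j"
      then have "(B ** R) $ i $ i = (B ** R) $ j $ i"
        by (simp add: f_def row_def vec_eq_iff matrix_matrix_mult_def)
      then show "i = j"
        using R by (simp add: mat_def split: if_splits)
    qed
    moreover have "vec.independent (range f)"
      using \<open>inj f\<close> \<open>\<exists>R. B ** R = mat 1\<close> unfolding invertible_iff by (simp add: independent_range_iff)
    ultimately show "rank B = CARD('m)"
      unfolding rank by (simp add: vec.dim_eq_card_independent card_image)
  qed
qed

section \<open>Generalized inverses\<close>

lemma gen_inv_simps:
  "G \<in> gen_inv {1} B \<longleftrightarrow> B ** G ** B = B"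
  "G \<in> gen_inv {1,2} B \<longleftrightarrow> B ** G ** B = B \<and> G ** B ** G = G"
  "G \<in> gen_inv {1,3} B \<longleftrightarrow> B ** G ** B = B \<and> cstar (B ** G) = B ** G"
  "G \<in> gen_inv {1,4} B \<longleftrightarrow> B ** G ** B = B \<and> cstar (G ** B) = G ** B"
  "G \<in> gen_inv {1,2,3} B \<longleftrightarrow> B ** G ** B = B \<and> G ** B ** G = G \<and> cstar (B ** G) = B ** G"
  "G \<in> gen_inv {1,2,4} B \<longleftrightarrow> B ** G ** B = B \<and> G ** B ** G = G \<and> cstar (G ** B) = G ** B"
  "G \<in> gen_inv {1,3,4} B \<longleftrightarrow> B ** G ** B = B \<and> cstar (B ** G) = B ** G \<and> cstar (G ** B) = G ** B"
  "G \<in> gen_inv {1,2,3,4} B \<longleftrightarrow>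
     B ** G ** B = B \<and> G ** B ** G = G \<and> cstar (B ** G) = B ** G \<and> cstar (G ** B) = G ** B"
  by (auto simp: gen_inv_def)

lemma gen_inv_antimono: "S \<subseteq> T \<Longrightarrow> gen_inv T B \<subseteq> gen_inv S B"
  unfolding gen_inv_def by blast

lemma inner_inverse_exists:
  fixes B :: "'a::field^'n^'m"
  shows "\<exists>G. B ** G ** B = B"
proof -
  obtain g where g: "Vector_Spaces.linear (*s) (*s) g" "\<forall>v\<in>range ((*v) B). B *v g v = v"
    using vec.linear_exists_right_inverse_on[OF matrix_vector_mul_linear_gen vec.subspace_UNIV]
    by blast
  have "B ** matrix g ** B = B"
    using g by (simp add: matrix_eq flip: matrix_vector_mul_assoc add: matrix_works)
  then show ?thesis by blast
qed

text \<open>The classical \<open>Y B\<^sup>*\<close> with \<open>Y\<close> an inner inverse of \<open>B\<^sup>*B\<close>: cancelling \<open>B\<^sup>*\<close> on the left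
  turns \<open>B\<^sup>*B Y B\<^sup>*B = B\<^sup>*B\<close> into \<open>B Y B\<^sup>*B = B\<close>.\<close>
lemma gen_inv_13_exists: "\<exists>G. G \<in> gen_inv {1,3} B"
proof -
  obtain Y where Y: "cstar B ** B ** Y ** (cstar B ** B) = cstar B ** B"
    using inner_inverse_exists by blast
  have "cstar B ** B ** (Y ** (cstar B ** B) - mat 1) = 0"
    using Y by (simp add: matrix_mult_diff_left matrix_mul_assoc)
  then have "B ** (Y ** (cstar B ** B) - mat 1) = 0"
    by (rule cstar_mult_cancel_left)
  then have BYB: "B ** Y ** cstar B ** B = B"
    by (simp add: matrix_mult_diff_left matrix_mul_assoc)
  then have "cstar B = cstar B ** B ** cstar Y ** cstar B"
    by (metis cstar_mult cstar_cstar matrix_mul_assoc)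
  then have "B ** Y ** cstar B = B ** cstar Y ** cstar B"
    by (metis BYB matrix_mul_assoc)
  then have "cstar (B ** (Y ** cstar B)) = B ** (Y ** cstar B)"
    by (simp add: cstar_mult matrix_mul_assoc)
  moreover have "B ** (Y ** cstar B) ** B = B"
    using BYB by (simp add: matrix_mul_assoc)
  ultimately show ?thesis
    unfolding gen_inv_simps by blast
qed

text \<open>Urquhart's formula: for a \<open>{1,3}\<close>-inverse \<open>X\<close> and a \<open>{1,4}\<close>-inverse \<open>Z\<^sup>*\<close> of \<open>B\<close>,
  the product \<open>Z\<^sup>* B X\<close> satisfies all four Penrose equations.\<close>
lemma moore_penrose_exists: "\<exists>G. G \<in> gen_inv {1,2,3,4} B"
proof -
  obtain X where X: "B ** X ** B = B" "cstar (B ** X) = B ** X"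
    using gen_inv_13_exists[of B] unfolding gen_inv_simps by blast
  obtain Z where "cstar B ** Z ** cstar B = cstar B" "cstar (cstar B ** Z) = cstar B ** Z"
    using gen_inv_13_exists[of "cstar B"] unfolding gen_inv_simps by blast
  then have Z: "B ** cstar Z ** B = B" "cstar (cstar Z ** B) = cstar Z ** B"
    by (metis cstar_mult cstar_cstar matrix_mul_assoc)+
  let ?G = "cstar Z ** B ** X"
  have "B ** ?G ** B = B" "?G ** B ** ?G = ?G" "cstar (B ** ?G) = B ** ?G" "cstar (?G ** B) = ?G ** B"
    using X Z by (metis matrix_mul_assoc)+
  then show ?thesis
    unfolding gen_inv_simps by blast
qed

lemma moore_penrose_unique:
  assumes "G \<in> gen_inv {1,2,3,4} B" "H \<in> gen_inv {1,2,3,4} B"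
  shows "G = H"
proof -
  have G: "B ** G ** B = B" "G ** B ** G = G" "cstar (B ** G) = B ** G" "cstar (G ** B) = G ** B"
    and H: "B ** H ** B = B" "H ** B ** H = H" "cstar (B ** H) = B ** H" "cstar (H ** B) = H ** B"
    using assms unfolding gen_inv_simps by auto
  have "G = G ** cstar G ** cstar B"
    by (metis G(2,3) cstar_mult matrix_mul_assoc)
  also have "\<dots> = G ** cstar G ** cstar B ** (B ** H)"
    by (metis H(1,3) cstar_mult matrix_mul_assoc)
  also have "\<dots> = G ** B ** H"
    by (metis G(2,3) cstar_mult matrix_mul_assoc)
  also have "\<dots> = G ** B ** cstar B ** cstar H ** H"
    by (metis H(2,4) cstar_mult matrix_mul_assoc)
  also have "\<dots> = cstar B ** cstar H ** H"
    by (metis G(1,4) cstar_mult matrix_mul_assoc)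
  also have "\<dots> = H"
    by (metis H(2,4) cstar_mult matrix_mul_assoc)
  finally show ?thesis .
qed

lemma moore_penrose_in_gen_inv: "moore_penrose B \<in> gen_inv {1,2,3,4} B"
  unfolding moore_penrose_def
  using moore_penrose_exists moore_penrose_unique by (metis theI)

lemma moore_penrose_eqs:
  "B ** moore_penrose B ** B = B" "moore_penrose B ** B ** moore_penrose B = moore_penrose B"
  "cstar (B ** moore_penrose B) = B ** moore_penrose B"
  "cstar (moore_penrose B ** B) = moore_penrose B ** B"
  using moore_penrose_in_gen_inv[of B] unfolding gen_inv_simps by auto

lemma inner_inverse_reflexive:
  assumes "B ** H ** B = B"
  shows "B ** (H ** B ** H) ** B = B" "(H ** B ** H) ** B ** (H ** B ** H) = H ** B ** H"
    "B ** (H ** B ** H) = B ** H" "(H ** B ** H) ** B = H ** B"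
  using assms by (metis matrix_mul_assoc)+

lemma inner_inverse_right_invertible:
  assumes "B ** R = mat 1" "B ** G ** B = B"
  shows "B ** G = mat 1"
  by (metis assms matrix_mul_assoc matrix_mul_rid)

lemma inner_inverse_left_invertible:
  assumes "L ** B = mat 1" "B ** G ** B = B"
  shows "G ** B = mat 1"
  by (metis assms matrix_mul_assoc matrix_mul_lid)

text \<open>Perturbing \<open>B\<^sup>\<dagger>\<close> by \<open>(I - B\<^sup>\<dagger>B) W (I - BB\<^sup>\<dagger>)\<close> keeps \<open>BG\<close> and \<open>GB\<close> but destroys
  reflexivity, since \<open>GBG = B\<^sup>\<dagger>\<close> regardless of \<open>W\<close>.\<close>
lemma ex_gen_inv_134_not_reflexive:
  fixes B :: "complex^'n^'m"
  assumes "rank B \<noteq> CARD('n)" "rank B \<noteq> CARD('m)"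
  shows "\<exists>G \<in> gen_inv {1,3,4} B. G ** B ** G \<noteq> G"
proof -
  define D where "D = moore_penrose B"
  note D = moore_penrose_eqs[of B, folded D_def]
  define K where "K = mat 1 - D ** B"
  define E where "E = mat 1 - B ** D"
  have "K \<noteq> 0" "E \<noteq> 0"
    using assms unfolding K_def E_def rank_eq_ncols_iff rank_eq_nrows_iff by auto
  then obtain W where W: "K ** W ** E \<noteq> 0"
    using ex_mult_mult_neq_zero by blast
  have BK: "B ** K = 0" and DBK: "D ** B ** K = 0" and EB: "E ** B = 0"
    unfolding K_def E_def using D
    by (simp_all add: matrix_mult_diff_left matrix_mult_diff_right matrix_mul_assoc)
  define G where "G = D + K ** W ** E"
  have BG: "B ** G = B ** D"
    unfolding G_def using BK by (simp add: matrix_add_ldistrib matrix_mul_assoc)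
  have GB: "G ** B = D ** B"
    unfolding G_def using EB by (simp add: matrix_mult_add_right flip: matrix_mul_assoc)
  have "G ** B ** G = D ** B ** G"
    by (simp add: GB)
  also have "\<dots> = D"
    unfolding G_def using D(2) DBK by (simp add: matrix_add_ldistrib matrix_mul_assoc)
  finally have "G ** B ** G = D" .
  then have "G ** B ** G \<noteq> G"
    using W unfolding G_def by simp
  moreover have "G \<in> gen_inv {1,3,4} B"
    unfolding gen_inv_simps BG GB using D by simp
  ultimately show ?thesis ..
qed

section \<open>Weighted \<open>{1,2,4}\<close>-inverses\<close>

locale weighted_inverse =
  fixes B :: "complex^'n^'m" and C Ci :: "complex^'n^'n"
  assumes C_Ci: "C ** Ci = mat 1" and Ci_C: "Ci ** C = mat 1"
begin

text \<open>With the positive definite weight \<open>N = (CC\<^sup>*)\<^sup>-\<^sup>1\<close>, the Hermitian condition below is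
  equivalent to \<open>(NXB)\<^sup>* = NXB\<close>: these are the \<open>{1,2,4}\<close>-inverses of \<open>B\<close> weighted by \<open>N\<close>.\<close>
definition weighted_inv :: "(complex^'m^'n) set" where
  "weighted_inv =
    {X. B ** X ** B = B \<and> X ** B ** X = X \<and> cstar (Ci ** X ** B ** C) = Ci ** X ** B ** C}"

definition proj :: "complex^'n^'n" where
  "proj = C ** moore_penrose (B ** C) ** B"

declare C_Ci [simp] Ci_C [simp]

lemma cstar_C_Ci [simp]: "cstar C ** cstar Ci = mat 1" and cstar_Ci_C [simp]: "cstar Ci ** cstar C = mat 1"
  by (metis Ci_C C_Ci cstar_mult cstar_mat_1)+

text \<open>Cancellation rules in the left-associated normal form that \<open>simp add: matrix_mul_assoc\<close>
  produces.\<close>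
lemmas mult_inverse_cancel [simp] =
  matrix_mul_right_inverse_cancel[OF C_Ci] matrix_mul_right_inverse_cancel[OF Ci_C]
  matrix_mul_right_inverse_cancel[OF cstar_C_Ci] matrix_mul_right_inverse_cancel[OF cstar_Ci_C]

lemma weighted_inv_witness: "C ** moore_penrose (B ** C) \<in> weighted_inv"
proof -
  define N where "N = moore_penrose (B ** C)"
  note N = moore_penrose_eqs[of "B ** C", folded N_def]
  have "B ** (C ** N) ** B = B ** C ** N ** B ** C ** Ci"
    by (simp add: matrix_mul_assoc)
  also have "\<dots> = B"
    using N(1) by (simp add: matrix_mul_assoc)
  finally have "B ** (C ** N) ** B = B" .
  moreover have "C ** N ** B ** (C ** N) = C ** N"
    using N(2) by (simp flip: matrix_mul_assoc)
  moreover have "Ci ** (C ** N) ** B ** C = N ** (B ** C)"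
    by (simp add: matrix_mul_assoc)
  ultimately show ?thesis
    unfolding weighted_inv_def N_def[symmetric] using N(4) by simp
qed

lemma weighted_inv_mult_eq_proj:
  assumes "X \<in> weighted_inv"
  shows "X ** B = proj"
proof -
  have absorb: "(Ci ** X ** B ** C) ** (Ci ** Y ** B ** C) = Ci ** X ** B ** C"
    if "B ** Y ** B = B" for X Y
  proof -
    have "(Ci ** X ** B ** C) ** (Ci ** Y ** B ** C) = Ci ** X ** (B ** Y ** B) ** C"
      by (simp add: matrix_mul_assoc)
    then show ?thesis
      using that by simp
  qed
  define G where "G = C ** moore_penrose (B ** C)"
  have G: "B ** G ** B = B" "cstar (Ci ** G ** B ** C) = Ci ** G ** B ** C"
    using weighted_inv_witness unfolding weighted_inv_def G_def by auto
  have X: "B ** X ** B = B" "cstar (Ci ** X ** B ** C) = Ci ** X ** B ** C"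
    using assms unfolding weighted_inv_def by auto
  have "Ci ** X ** B ** C = Ci ** G ** B ** C"
    by (rule hermitian_eqI) (simp_all only: absorb G X)
  also have "\<dots> = Ci ** proj ** C"
    unfolding G_def proj_def by (simp add: matrix_mul_assoc)
  finally have "Ci ** X ** B ** C = Ci ** proj ** C" .
  then have "C ** (Ci ** X ** B ** C) ** Ci = C ** (Ci ** proj ** C) ** Ci"
    by simp
  then show ?thesis
    by (simp add: matrix_mul_assoc)
qed

lemma proj_similar_hermitian: "cstar (Ci ** proj ** C) = Ci ** proj ** C"
  using weighted_inv_witness unfolding weighted_inv_def proj_def by (simp add: matrix_mul_assoc)

lemma mult_proj: "B ** proj = B"
  using weighted_inv_witness unfolding weighted_inv_def proj_def by (simp add: matrix_mul_assoc)

lemma mem_weighted_inv_iff: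
  "X \<in> weighted_inv \<longleftrightarrow> B ** X ** B = B \<and> X ** B ** X = X \<and> X ** B = proj"
proof
  assume "X \<in> weighted_inv"
  then show "B ** X ** B = B \<and> X ** B ** X = X \<and> X ** B = proj"
    using weighted_inv_mult_eq_proj unfolding weighted_inv_def by blast
next
  assume X: "B ** X ** B = B \<and> X ** B ** X = X \<and> X ** B = proj"
  have "Ci ** X ** B ** C = Ci ** proj ** C"
    using X by (simp flip: matrix_mul_assoc)
  then have "cstar (Ci ** X ** B ** C) = Ci ** X ** B ** C"
    using proj_similar_hermitian by simp
  then show "X \<in> weighted_inv"
    using X unfolding weighted_inv_def by blast
qed

lemma weighted_inv_zero: "B = 0 \<Longrightarrow> weighted_inv = {0}"
  unfolding weighted_inv_def by auto

lemma weighted_inv_subset_gen_inv_12: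
  "weighted_inv \<subseteq> gen_inv {1,2} B" "weighted_inv \<subseteq> gen_inv {1} B"
  unfolding weighted_inv_def subset_iff gen_inv_simps by blast+

lemma hermitian_proj_if_mem_weighted_inv:
  "X \<in> weighted_inv \<Longrightarrow> cstar (X ** B) = X ** B \<Longrightarrow> cstar proj = proj"
  using weighted_inv_mult_eq_proj by simp

lemma proj_idem: "proj ** proj = proj"
  unfolding proj_def using mult_proj[unfolded proj_def] by (simp flip: matrix_mul_assoc)

lemma proj_mult_moore_penrose: "proj ** moore_penrose B ** B = proj"
  unfolding proj_def using moore_penrose_eqs(1)[of B] by (simp flip: matrix_mul_assoc)

lemma mult_eq_proj_if_hermitian:
  assumes "B ** X ** B = B" "cstar (X ** B) = X ** B" "cstar proj = proj"
  shows "X ** B = proj"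
proof (rule hermitian_eqI)
  show "X ** B ** proj = X ** B"
    using mult_proj by (simp flip: matrix_mul_assoc)
  show "proj ** (X ** B) = proj"
    unfolding proj_def using assms(1) by (simp flip: matrix_mul_assoc)
qed (use assms in auto)

lemma proj_moore_penrose_mem:
  "proj ** moore_penrose B \<in> weighted_inv" "proj ** moore_penrose B \<in> gen_inv {1,2,3} B"
proof -
  note D = moore_penrose_eqs[of B]
  have BG: "B ** (proj ** moore_penrose B) = B ** moore_penrose B"
    using mult_proj by (simp add: matrix_mul_assoc)
  have GB: "proj ** moore_penrose B ** B = proj"
    by (rule proj_mult_moore_penrose)
  have "proj ** moore_penrose B ** B ** (proj ** moore_penrose B) = proj ** moore_penrose B"
    unfolding GB using proj_idem by (simp add: matrix_mul_assoc)
  then show "proj ** moore_penrose B \<in> weighted_inv" "proj ** moore_penrose B \<in> gen_inv {1,2,3} B"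
    unfolding mem_weighted_inv_iff gen_inv_simps BG GB using D(1,3) by (simp_all flip: matrix_mul_assoc)
qed

lemma proj_hermitian_iff_commute:
  defines "S \<equiv> C ** cstar C" and "E \<equiv> moore_penrose B ** B"
  shows "cstar proj = proj \<longleftrightarrow> S ** E = E ** S"
proof -
  have key: "S ** cstar proj = proj ** S"
    unfolding S_def using hermitian_similar_imp_commute[OF C_Ci Ci_C proj_similar_hermitian] .
  have proj_E: "proj ** E = proj"
    unfolding proj_def E_def using moore_penrose_eqs(1)[of B] by (simp flip: matrix_mul_assoc)
  have E_proj: "E ** proj = E"
    using mult_proj unfolding E_def by (simp flip: matrix_mul_assoc)
  have E_herm: "cstar E = E"
    unfolding E_def by (rule moore_penrose_eqs(4))
  show ?thesis
  proof
    assume herm: "cstar proj = proj"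
    have "proj = E"
      by (rule hermitian_eqI[OF proj_E E_proj herm E_herm])
    then show "S ** E = E ** S"
      using key E_herm by simp
  next
    assume comm: "S ** E = E ** S"
    have "cstar proj ** E = cstar (E ** proj)"
      using E_herm by (simp add: cstar_mult)
    then have proj_herm_E: "cstar proj ** E = E"
      using E_proj E_herm by simp
    have "proj ** S ** E = S ** cstar proj ** E"
      by (simp add: key)
    also have "\<dots> = E ** S"
      using proj_herm_E comm by (simp flip: matrix_mul_assoc)
    finally have "proj ** S ** E = E ** S" .
    moreover have "proj ** S ** E = proj ** E ** S"
      using comm by (simp flip: matrix_mul_assoc)
    ultimately have "proj ** S = E ** S"
      using proj_E by simp
    then have "proj ** S ** (cstar Ci ** Ci) = E ** S ** (cstar Ci ** Ci)"
      by simp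
    then have "proj = E"
      unfolding S_def by (simp add: matrix_mul_assoc)
    then show "cstar proj = proj"
      using E_herm by simp
  qed
qed

lemma proj_hermitian_iff:
  "cstar proj = proj \<longleftrightarrow> colspace (C ** cstar C ** cstar B) = colspace (cstar B)"
proof -
  define E where "E = moore_penrose B ** B"
  have E_herm: "cstar E = E"
    unfolding E_def by (rule moore_penrose_eqs(4))
  have "E ** cstar B = cstar (B ** E)"
    using E_herm by (simp add: cstar_mult)
  then have "E ** cstar B = cstar B"
    unfolding E_def using moore_penrose_eqs(1)[of B] by (simp add: matrix_mul_assoc)
  moreover have "E = cstar B ** cstar (moore_penrose B)"
    using E_herm unfolding E_def by (simp add: cstar_mult)
  moreover have "C ** cstar C ** (cstar Ci ** Ci) = mat 1" "cstar Ci ** Ci ** (C ** cstar C) = mat 1"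
    "cstar (C ** cstar C) = C ** cstar C"
    by (simp_all add: matrix_mul_assoc cstar_mult)
  ultimately show ?thesis
    unfolding proj_hermitian_iff_commute E_def[symmetric]
    using colspace_mult_eq_iff_commute E_herm by blast
qed

lemma left_invertible_imp_mem_weighted_inv:
  assumes "rank B = CARD('n)" "B ** X ** B = B"
  shows "X \<in> weighted_inv"
proof -
  obtain L where L: "L ** B = mat 1"
    using assms(1) rank_eq_ncols_iff by blast
  have "X ** B = mat 1" "proj = mat 1"
    using inner_inverse_left_invertible[OF L] assms(2) weighted_inv_witness
    unfolding weighted_inv_def proj_def by (auto simp: matrix_mul_assoc)
  then show ?thesis
    unfolding mem_weighted_inv_iff using assms(2) by (simp flip: matrix_mul_assoc)
qed

text \<open>Adding \<open>(I - P) W\<close>, which \<open>B\<close> annihilates from the left, to \<open>P B\<^sup>\<dagger>\<close> changes \<open>XB\<close>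
  as soon as \<open>(I - P) W B \<noteq> 0\<close>.\<close>
lemma ex_gen_inv_123_not_mem_weighted_inv:
  assumes "B \<noteq> 0" "rank B \<noteq> CARD('n)"
  shows "\<exists>H \<in> gen_inv {1,2,3} B. H \<notin> weighted_inv"
proof -
  define G where "G = proj ** moore_penrose B"
  have G: "B ** G ** B = B" "cstar (B ** G) = B ** G" "G ** B = proj"
    using proj_moore_penrose_mem mem_weighted_inv_iff unfolding G_def gen_inv_simps by auto
  have "mat 1 - proj \<noteq> 0"
    using assms(2) weighted_inv_witness unfolding rank_eq_ncols_iff proj_def by auto
  then obtain W where W: "(mat 1 - proj) ** W ** B \<noteq> 0"
    using ex_mult_mult_neq_zero assms(1) by blast
  define H where "H = G + (mat 1 - proj) ** W"
  have "B ** (mat 1 - proj) = 0"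
    using mult_proj by (simp add: matrix_mult_diff_left)
  then have BH: "B ** H = B ** G"
    unfolding H_def by (simp add: matrix_add_ldistrib matrix_mul_assoc)
  have HB: "H ** B = proj + (mat 1 - proj) ** W ** B"
    unfolding H_def using G(3) by (simp add: matrix_mult_add_right)
  have BHB: "B ** H ** B = B"
    using BH G(1) by simp
  have "H ** B ** H \<in> gen_inv {1,2,3} B"
    unfolding gen_inv_simps using inner_inverse_reflexive[OF BHB] BH G(2) by simp
  moreover have "H ** B ** H \<notin> weighted_inv"
    using inner_inverse_reflexive(4)[OF BHB] HB W mem_weighted_inv_iff by auto
  ultimately show ?thesis ..
qed

text \<open>Here the perturbation \<open>P B\<^sup>\<dagger> Z (I - BB\<^sup>\<dagger>)\<close> is annihilated by \<open>B\<close> from the right, so it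
  stays in the weighted inverses while \<open>BX\<close> acquires the non-Hermitian part \<open>BB\<^sup>\<dagger> Z (I - BB\<^sup>\<dagger>)\<close>.\<close>
lemma ex_weighted_inv_not_gen_inv_13:
  assumes "B \<noteq> 0" "rank B \<noteq> CARD('m)"
  shows "\<exists>X \<in> weighted_inv. cstar (B ** X) \<noteq> B ** X"
proof -
  define D where "D = moore_penrose B"
  note D = moore_penrose_eqs[of B, folded D_def]
  define G where "G = proj ** D"
  have G: "G \<in> weighted_inv" "B ** G = B ** D" "G ** B = proj" "proj ** G = G"
    using proj_moore_penrose_mem(1) mult_proj proj_idem unfolding G_def D_def
    by (auto simp: matrix_mul_assoc mem_weighted_inv_iff)
  define E where "E = mat 1 - B ** D"
  have "B ** D \<noteq> 0"
    using assms(1) D(1) by auto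
  moreover have "E \<noteq> 0"
    using assms(2) unfolding E_def rank_eq_nrows_iff by auto
  ultimately obtain Z where Z: "B ** D ** Z ** E \<noteq> 0"
    using ex_mult_mult_neq_zero by blast
  have EB: "E ** B = 0" and BDE: "B ** D ** E = 0" and E_herm: "cstar E = E"
    unfolding E_def using D
    by (simp_all add: matrix_mult_diff_left matrix_mult_diff_right cstar_diff matrix_mul_assoc)
  define X where "X = G + G ** Z ** E"
  have XB: "X ** B = proj"
    unfolding X_def using G(3) EB by (simp add: matrix_mult_add_right flip: matrix_mul_assoc)
  have "X ** B ** X = proj ** X"
    by (simp add: XB)
  also have "\<dots> = X"
    unfolding X_def using G(4) by (simp add: matrix_add_ldistrib matrix_mul_assoc)
  finally have "X ** B ** X = X" .
  then have "X \<in> weighted_inv"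
    unfolding mem_weighted_inv_iff using XB mult_proj by (simp flip: matrix_mul_assoc)
  moreover have "cstar (B ** X) \<noteq> B ** X"
  proof
    have BX: "B ** X = B ** D + B ** D ** Z ** E"
      unfolding X_def using G(2) by (simp add: matrix_add_ldistrib matrix_mul_assoc)
    assume "cstar (B ** X) = B ** X"
    then have "B ** D + E ** cstar Z ** (B ** D) = B ** D + B ** D ** Z ** E"
      unfolding BX using D(3) E_herm by (simp add: cstar_add cstar_mult flip: matrix_mul_assoc)
    then have "B ** D ** (E ** cstar Z ** (B ** D)) = B ** D ** (B ** D ** Z ** E)"
      by simp
    then show False
      using Z BDE D(1) by (simp add: matrix_mul_assoc)
  qed
  ultimately show ?thesis ..
qed

lemma gen_inv_1_subset_weighted_inv_iff:
  "gen_inv {1} B \<subseteq> weighted_inv \<longleftrightarrow> rank B = CARD('n)"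
  "gen_inv {1,3} B \<subseteq> weighted_inv \<longleftrightarrow> rank B = CARD('n)"
proof -
  have "rank B = CARD('n)" if "gen_inv {1,3} B \<subseteq> weighted_inv"
  proof (rule ccontr)
    assume rank: "rank B \<noteq> CARD('n)"
    show False
    proof (cases "B = 0")
      case True
      then have "(\<chi> i j. 1) \<in> gen_inv {1,3} B"
        unfolding gen_inv_simps by simp
      then show False
        using that weighted_inv_zero[OF True] by (auto simp: vec_eq_iff)
    next
      case False
      then show False
        using that ex_gen_inv_123_not_mem_weighted_inv[OF False rank] gen_inv_antimono[of "{1,3}" "{1,2,3}" B]
        by blast
    qed
  qed
  moreover have "gen_inv {1} B \<subseteq> weighted_inv" if "rank B = CARD('n)"
    using left_invertible_imp_mem_weighted_inv[OF that] unfolding subset_iff gen_inv_simps by blast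
  moreover have "gen_inv {1,3} B \<subseteq> gen_inv {1} B"
    by (rule gen_inv_antimono) simp
  ultimately show "gen_inv {1} B \<subseteq> weighted_inv \<longleftrightarrow> rank B = CARD('n)"
    "gen_inv {1,3} B \<subseteq> weighted_inv \<longleftrightarrow> rank B = CARD('n)"
    by blast+
qed

lemma gen_inv_12_subset_weighted_inv_iff:
  "gen_inv {1,2} B \<subseteq> weighted_inv \<longleftrightarrow> B = 0 \<or> rank B = CARD('n)"
  "gen_inv {1,2,3} B \<subseteq> weighted_inv \<longleftrightarrow> B = 0 \<or> rank B = CARD('n)"
proof -
  have "B = 0 \<or> rank B = CARD('n)" if "gen_inv {1,2,3} B \<subseteq> weighted_inv"
    using that ex_gen_inv_123_not_mem_weighted_inv by blast
  moreover have "gen_inv {1,2} B \<subseteq> weighted_inv" if "B = 0"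
    using that weighted_inv_zero unfolding subset_iff gen_inv_simps by auto
  moreover have "gen_inv {1,2} B \<subseteq> weighted_inv" if "rank B = CARD('n)"
    using that gen_inv_1_subset_weighted_inv_iff(1) gen_inv_antimono[of "{1}" "{1,2}" B] by blast
  moreover have "gen_inv {1,2,3} B \<subseteq> gen_inv {1,2} B"
    by (rule gen_inv_antimono) auto
  ultimately show "gen_inv {1,2} B \<subseteq> weighted_inv \<longleftrightarrow> B = 0 \<or> rank B = CARD('n)"
    "gen_inv {1,2,3} B \<subseteq> weighted_inv \<longleftrightarrow> B = 0 \<or> rank B = CARD('n)"
    by blast+
qed

lemma weighted_inv_subset_gen_inv_13_iff:
  "weighted_inv \<subseteq> gen_inv {1,3} B \<longleftrightarrow> B = 0 \<or> rank B = CARD('m)"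
  "weighted_inv \<subseteq> gen_inv {1,2,3} B \<longleftrightarrow> B = 0 \<or> rank B = CARD('m)"
proof -
  have "B = 0 \<or> rank B = CARD('m)" if "weighted_inv \<subseteq> gen_inv {1,3} B"
    using that ex_weighted_inv_not_gen_inv_13 unfolding subset_iff gen_inv_simps by blast
  moreover have "weighted_inv \<subseteq> gen_inv {1,3} B" if "B = 0"
    using that weighted_inv_zero unfolding subset_iff gen_inv_simps by simp
  moreover have "weighted_inv \<subseteq> gen_inv {1,3} B" if rank: "rank B = CARD('m)"
  proof
    fix X
    assume "X \<in> weighted_inv"
    then have BXB: "B ** X ** B = B"
      unfolding weighted_inv_def by blast
    obtain R where "B ** R = mat 1"
      using rank rank_eq_nrows_iff by blast
    then have "B ** X = mat 1"
      using BXB by (rule inner_inverse_right_invertible)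
    then show "X \<in> gen_inv {1,3} B"
      unfolding gen_inv_simps using BXB by simp
  qed
  moreover have "gen_inv {1,2,3} B = gen_inv {1,2} B \<inter> gen_inv {1,3} B"
    unfolding gen_inv_def by auto
  ultimately show "weighted_inv \<subseteq> gen_inv {1,3} B \<longleftrightarrow> B = 0 \<or> rank B = CARD('m)"
    "weighted_inv \<subseteq> gen_inv {1,2,3} B \<longleftrightarrow> B = 0 \<or> rank B = CARD('m)"
    using weighted_inv_subset_gen_inv_12 by blast+
qed

lemma weighted_inv_subset_gen_inv_14_iff:
  "weighted_inv \<subseteq> gen_inv {1,4} B \<longleftrightarrow> cstar proj = proj"
  "weighted_inv \<subseteq> gen_inv {1,2,4} B \<longleftrightarrow> cstar proj = proj"
proof -
  have "cstar proj = proj" if "weighted_inv \<subseteq> gen_inv {1,4} B"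
    using that weighted_inv_witness hermitian_proj_if_mem_weighted_inv
    unfolding subset_iff gen_inv_simps by blast
  moreover have "weighted_inv \<subseteq> gen_inv {1,4} B" if "cstar proj = proj"
    using that unfolding subset_iff gen_inv_simps mem_weighted_inv_iff by simp
  moreover have "gen_inv {1,2,4} B = gen_inv {1,2} B \<inter> gen_inv {1,4} B"
    unfolding gen_inv_def by auto
  ultimately show "weighted_inv \<subseteq> gen_inv {1,4} B \<longleftrightarrow> cstar proj = proj"
    "weighted_inv \<subseteq> gen_inv {1,2,4} B \<longleftrightarrow> cstar proj = proj"
    using weighted_inv_subset_gen_inv_12 by blast+
qed

lemma weighted_inv_Int_gen_inv:
  "weighted_inv \<inter> gen_inv {1,3} B \<noteq> {}"
  "weighted_inv \<inter> gen_inv {1,2,3} B \<noteq> {}"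
  "weighted_inv \<inter> gen_inv {1,4} B \<noteq> {} \<longleftrightarrow> cstar proj = proj"
  "weighted_inv \<inter> gen_inv {1,2,4} B \<noteq> {} \<longleftrightarrow> cstar proj = proj"
  "weighted_inv \<inter> gen_inv {1,3,4} B \<noteq> {} \<longleftrightarrow> cstar proj = proj"
proof -
  define G where "G = proj ** moore_penrose B"
  have G: "G \<in> weighted_inv" "G \<in> gen_inv {1,2,3} B"
    unfolding G_def by (rule proj_moore_penrose_mem)+
  moreover have "gen_inv {1,2,3} B \<subseteq> gen_inv {1,3} B"
    by (rule gen_inv_antimono) auto
  ultimately show "weighted_inv \<inter> gen_inv {1,2,3} B \<noteq> {}" "weighted_inv \<inter> gen_inv {1,3} B \<noteq> {}"
    by blast+
  have "G \<in> gen_inv {1,2,3,4} B" if "cstar proj = proj"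
    using G that weighted_inv_mult_eq_proj unfolding gen_inv_simps by simp
  moreover have "gen_inv {1,2,3,4} B \<subseteq> gen_inv {1,2,4} B" "gen_inv {1,2,3,4} B \<subseteq> gen_inv {1,3,4} B"
    by (rule gen_inv_antimono; auto)+
  ultimately have "weighted_inv \<inter> gen_inv {1,2,4} B \<noteq> {}" "weighted_inv \<inter> gen_inv {1,3,4} B \<noteq> {}"
    if "cstar proj = proj"
    using G(1) that by blast+
  moreover have "cstar proj = proj" if nonempty: "weighted_inv \<inter> gen_inv {1,4} B \<noteq> {}"
  proof -
    obtain X where "X \<in> weighted_inv" "X \<in> gen_inv {1,4} B"
      using nonempty by blast
    then show ?thesis
      using hermitian_proj_if_mem_weighted_inv unfolding gen_inv_simps by blast
  qed
  moreover have "gen_inv {1,2,4} B \<subseteq> gen_inv {1,4} B" "gen_inv {1,3,4} B \<subseteq> gen_inv {1,4} B"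
    by (rule gen_inv_antimono; auto)+
  ultimately show
    "weighted_inv \<inter> gen_inv {1,4} B \<noteq> {} \<longleftrightarrow> cstar proj = proj"
    "weighted_inv \<inter> gen_inv {1,2,4} B \<noteq> {} \<longleftrightarrow> cstar proj = proj"
    "weighted_inv \<inter> gen_inv {1,3,4} B \<noteq> {} \<longleftrightarrow> cstar proj = proj"
    by blast+
qed

lemma moore_penrose_mem_weighted_inv_iff: "moore_penrose B \<in> weighted_inv \<longleftrightarrow> cstar proj = proj"
  using hermitian_proj_if_mem_weighted_inv mult_eq_proj_if_hermitian moore_penrose_eqs[of B]
  unfolding mem_weighted_inv_iff by blast

lemma gen_inv_124_subset_weighted_inv_iff: "gen_inv {1,2,4} B \<subseteq> weighted_inv \<longleftrightarrow> cstar proj = proj"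
proof
  assume "gen_inv {1,2,4} B \<subseteq> weighted_inv"
  moreover have "moore_penrose B \<in> gen_inv {1,2,4} B"
    using moore_penrose_eqs[of B] unfolding gen_inv_simps by blast
  ultimately show "cstar proj = proj"
    using moore_penrose_mem_weighted_inv_iff by blast
next
  assume "cstar proj = proj"
  then show "gen_inv {1,2,4} B \<subseteq> weighted_inv"
    using mult_eq_proj_if_hermitian unfolding subset_iff gen_inv_simps mem_weighted_inv_iff by blast
qed

lemma gen_inv_14_subset_weighted_inv_iff:
  "gen_inv {1,4} B \<subseteq> weighted_inv \<longleftrightarrow>
    cstar proj = proj \<and> (rank B = CARD('n) \<or> rank B = CARD('m))"
  "gen_inv {1,3,4} B \<subseteq> weighted_inv \<longleftrightarrow>
    cstar proj = proj \<and> (rank B = CARD('n) \<or> rank B = CARD('m))"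
proof -
  have "cstar proj = proj" if sub: "gen_inv {1,3,4} B \<subseteq> weighted_inv"
  proof -
    have "moore_penrose B \<in> gen_inv {1,3,4} B"
      using moore_penrose_eqs[of B] unfolding gen_inv_simps by blast
    then show ?thesis
      using sub moore_penrose_mem_weighted_inv_iff by blast
  qed
  moreover have "rank B = CARD('n) \<or> rank B = CARD('m)" if sub: "gen_inv {1,3,4} B \<subseteq> weighted_inv"
    using sub ex_gen_inv_134_not_reflexive[of B] mem_weighted_inv_iff by blast
  moreover have "gen_inv {1,4} B \<subseteq> weighted_inv" if "rank B = CARD('n)"
    using left_invertible_imp_mem_weighted_inv[OF that] unfolding subset_iff gen_inv_simps by blast
  moreover have "gen_inv {1,4} B \<subseteq> weighted_inv" if herm: "cstar proj = proj" and rank: "rank B = CARD('m)"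
  proof
    fix X
    assume "X \<in> gen_inv {1,4} B"
    then have X: "B ** X ** B = B" "cstar (X ** B) = X ** B"
      unfolding gen_inv_simps by blast+
    obtain R where "B ** R = mat 1"
      using rank rank_eq_nrows_iff by blast
    then have "B ** X = mat 1"
      using X(1) by (rule inner_inverse_right_invertible)
    then have "X ** B ** X = X"
      by (simp flip: matrix_mul_assoc)
    then show "X \<in> weighted_inv"
      unfolding mem_weighted_inv_iff using X mult_eq_proj_if_hermitian[OF X herm] by blast
  qed
  moreover have "gen_inv {1,3,4} B \<subseteq> gen_inv {1,4} B"
    by (rule gen_inv_antimono) auto
  ultimately show
    "gen_inv {1,4} B \<subseteq> weighted_inv \<longleftrightarrow>
      cstar proj = proj \<and> (rank B = CARD('n) \<or> rank B = CARD('m))"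
    "gen_inv {1,3,4} B \<subseteq> weighted_inv \<longleftrightarrow>
      cstar proj = proj \<and> (rank B = CARD('n) \<or> rank B = CARD('m))"
    by blast+
qed

lemma weighted_inv_subset_gen_inv_134_iff:
  "weighted_inv \<subseteq> gen_inv {1,3,4} B \<longleftrightarrow> B = 0 \<or> (cstar proj = proj \<and> rank B = CARD('m))"
proof -
  have "gen_inv {1,3,4} B = gen_inv {1,3} B \<inter> gen_inv {1,4} B"
    unfolding gen_inv_def by auto
  moreover have "cstar proj = proj" if "B = 0"
    using that unfolding proj_def by simp
  ultimately show ?thesis
    using weighted_inv_subset_gen_inv_13_iff(1) weighted_inv_subset_gen_inv_14_iff(1) by blast
qed

lemma mem_gen_inv_124_product_iff:
  assumes "A ** Ai = mat 1" "Ai ** A = mat 1"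
  shows "G \<in> gen_inv {1,2,4} (A ** B ** C) \<longleftrightarrow> C ** G ** A \<in> weighted_inv"
proof -
  have "A ** B ** C ** G ** (A ** B ** C) = A ** (B ** (C ** G ** A) ** B) ** C"
    by (simp add: matrix_mul_assoc)
  moreover have "C ** (G ** (A ** B ** C) ** G) ** A = C ** G ** A ** B ** (C ** G ** A)"
    by (simp add: matrix_mul_assoc)
  moreover have "G ** (A ** B ** C) = Ci ** (C ** G ** A) ** B ** C"
    by (simp add: matrix_mul_assoc)
  ultimately show ?thesis
    unfolding gen_inv_simps weighted_inv_def mem_Collect_eq
    using invertible_sandwich_cancel[OF assms(2) C_Ci, of _ B]
      invertible_sandwich_cancel[OF Ci_C assms(1), of _ G]
    by metis
qed

lemma gen_inv_124_product:
  assumes "A ** Ai = mat 1" "Ai ** A = mat 1"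
  shows "gen_inv {1,2,4} (A ** B ** C) = (\<lambda>X. Ci ** X ** Ai) ` weighted_inv"
proof
  show "gen_inv {1,2,4} (A ** B ** C) \<subseteq> (\<lambda>X. Ci ** X ** Ai) ` weighted_inv"
  proof
    fix G
    assume "G \<in> gen_inv {1,2,4} (A ** B ** C)"
    then have "C ** G ** A \<in> weighted_inv"
      using mem_gen_inv_124_product_iff[OF assms] by blast
    moreover have "Ci ** (C ** G ** A) ** Ai = G"
      using assms(1) by (simp add: matrix_mul_assoc matrix_mul_right_inverse_cancel)
    ultimately show "G \<in> (\<lambda>X. Ci ** X ** Ai) ` weighted_inv"
      by (metis image_eqI)
  qed
next
  show "(\<lambda>X. Ci ** X ** Ai) ` weighted_inv \<subseteq> gen_inv {1,2,4} (A ** B ** C)"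
  proof
    fix G
    assume "G \<in> (\<lambda>X. Ci ** X ** Ai) ` weighted_inv"
    then obtain X where "X \<in> weighted_inv" "G = Ci ** X ** Ai"
      by blast
    moreover have "C ** (Ci ** X ** Ai) ** A = X"
      using assms(2) by (simp add: matrix_mul_assoc matrix_mul_right_inverse_cancel)
    ultimately show "G \<in> gen_inv {1,2,4} (A ** B ** C)"
      using mem_gen_inv_124_product_iff[OF assms] by simp
  qed
qed

end

theorem theorem4p2:
  fixes A :: "complex^'m^'m" and B :: "complex^'n^'m" and C :: "complex^'n^'n"
  assumes "invertible A" and "invertible C"
  shows
  "(gen_inv {1,2,4} (A ** B ** C) \<subseteq> tri_set A {1} B C) \<and>
   ((gen_inv {1,2,4} (A ** B ** C) \<supseteq> tri_set A {1} B C) \<longleftrightarrow> (gen_inv {1,2,4} (A ** B ** C) = tri_set A {1} B C)) \<and>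
   ((gen_inv {1,2,4} (A ** B ** C) = tri_set A {1} B C) \<longleftrightarrow> rank B = CARD('n)) \<and>

   (gen_inv {1,2,4} (A ** B ** C) \<subseteq> tri_set A {1,2} B C) \<and>
   ((gen_inv {1,2,4} (A ** B ** C) \<supseteq> tri_set A {1,2} B C) \<longleftrightarrow> (gen_inv {1,2,4} (A ** B ** C) = tri_set A {1,2} B C)) \<and>
   ((gen_inv {1,2,4} (A ** B ** C) = tri_set A {1,2} B C) \<longleftrightarrow> (B = 0 \<or> rank B = CARD('n))) \<and>

   (gen_inv {1,2,4} (A ** B ** C) \<inter> tri_set A {1,3} B C \<noteq> {}) \<and>
   ((gen_inv {1,2,4} (A ** B ** C) \<supseteq> tri_set A {1,3} B C) \<longleftrightarrow> rank B = CARD('n)) \<and>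
   ((gen_inv {1,2,4} (A ** B ** C) \<subseteq> tri_set A {1,3} B C) \<longleftrightarrow> (B = 0 \<or> rank B = CARD('m))) \<and>
   ((gen_inv {1,2,4} (A ** B ** C) = tri_set A {1,3} B C) \<longleftrightarrow> (rank B = CARD('m) \<and> CARD('m) = CARD('n))) \<and>

   ((gen_inv {1,2,4} (A ** B ** C) \<inter> tri_set A {1,4} B C \<noteq> {}) \<longleftrightarrow> (gen_inv {1,2,4} (A ** B ** C) \<subseteq> tri_set A {1,4} B C)) \<and>
   ((gen_inv {1,2,4} (A ** B ** C) \<subseteq> tri_set A {1,4} B C) \<longleftrightarrow> colspace (C ** cstar C ** cstar B) = colspace (cstar B)) \<and>
   ((gen_inv {1,2,4} (A ** B ** C) \<supseteq> tri_set A {1,4} B C) \<longleftrightarrow> (gen_inv {1,2,4} (A ** B ** C) = tri_set A {1,4} B C)) \<and>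
   ((gen_inv {1,2,4} (A ** B ** C) = tri_set A {1,4} B C) \<longleftrightarrow>
      (colspace (C ** cstar C ** cstar B) = colspace (cstar B) \<and> rank B = min CARD('m) CARD('n))) \<and>

   (gen_inv {1,2,4} (A ** B ** C) \<inter> tri_set A {1,2,3} B C \<noteq> {}) \<and>
   ((gen_inv {1,2,4} (A ** B ** C) \<supseteq> tri_set A {1,2,3} B C) \<longleftrightarrow> (B = 0 \<or> rank B = CARD('n))) \<and>
   ((gen_inv {1,2,4} (A ** B ** C) \<subseteq> tri_set A {1,2,3} B C) \<longleftrightarrow> (B = 0 \<or> rank B = CARD('m))) \<and>
   ((gen_inv {1,2,4} (A ** B ** C) = tri_set A {1,2,3} B C) \<longleftrightarrow> (B = 0 \<or> (rank B = CARD('m) \<and> CARD('m) = CARD('n)))) \<and>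

   ((gen_inv {1,2,4} (A ** B ** C) \<inter> tri_set A {1,2,4} B C \<noteq> {}) \<longleftrightarrow> (gen_inv {1,2,4} (A ** B ** C) = tri_set A {1,2,4} B C)) \<and>
   ((gen_inv {1,2,4} (A ** B ** C) = tri_set A {1,2,4} B C) \<longleftrightarrow> colspace (C ** cstar C ** cstar B) = colspace (cstar B)) \<and>

   ((gen_inv {1,2,4} (A ** B ** C) \<inter> tri_set A {1,3,4} B C \<noteq> {}) \<longleftrightarrow> colspace (C ** cstar C ** cstar B) = colspace (cstar B)) \<and>
   ((gen_inv {1,2,4} (A ** B ** C) \<supseteq> tri_set A {1,3,4} B C) \<longleftrightarrow>
      (colspace (C ** cstar C ** cstar B) = colspace (cstar B) \<and> rank B = min CARD('m) CARD('n))) \<and>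
   ((gen_inv {1,2,4} (A ** B ** C) \<subseteq> tri_set A {1,3,4} B C) \<longleftrightarrow>
      (B = 0 \<or> (colspace (C ** cstar C ** cstar B) = colspace (cstar B) \<and> rank B = CARD('m)))) \<and>
   ((gen_inv {1,2,4} (A ** B ** C) = tri_set A {1,3,4} B C) \<longleftrightarrow>
      (colspace (C ** cstar C ** cstar B) = colspace (cstar B) \<and> rank B = CARD('m))) \<and>

   ((matrix_inv C ** moore_penrose B ** matrix_inv A \<in> gen_inv {1,2,4} (A ** B ** C)) \<longleftrightarrow>
      colspace (C ** cstar C ** cstar B) = colspace (cstar B))"
proof -
  have A: "A ** matrix_inv A = mat 1" "matrix_inv A ** A = mat 1"
    using assms(1) by (simp_all add: matrix_inv_right matrix_inv_left)
  have C: "C ** matrix_inv C = mat 1" "matrix_inv C ** C = mat 1"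
    using assms(2) by (simp_all add: matrix_inv_right matrix_inv_left)
  interpret weighted_inverse B C "matrix_inv C"
    using C by unfold_locales
  let ?f = "\<lambda>X. matrix_inv C ** X ** matrix_inv A"
  have inj: "inj ?f"
    by (rule injI) (simp add: invertible_sandwich_cancel[OF C(1) A(2)])
  have rank: "rank B \<le> CARD('m)" "rank B \<le> CARD('n)"
    "rank B = CARD('m) \<Longrightarrow> B \<noteq> 0" "rank B = CARD('n) \<Longrightarrow> B \<noteq> 0"
    using rank_le_nrows rank_le_ncols by auto
  have eq: "weighted_inv = gen_inv S B \<longleftrightarrow>
      weighted_inv \<subseteq> gen_inv S B \<and> gen_inv S B \<subseteq> weighted_inv" for S
    by blast
  show ?thesis
    unfolding gen_inv_124_product[OF A] tri_set_def image_Int[OF inj, symmetric] image_is_empty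
      inj_image_subset_iff[OF inj] inj_image_eq_iff[OF inj] inj_image_mem_iff[OF inj]
      proj_hermitian_iff[symmetric] eq
    using rank
    \<comment> \<open>\<open>simp only\<close>: the full simplifier would first rewrite \<open>{1,...}\<close> to \<open>{Suc 0,...}\<close>.\<close>
    by (simp only: weighted_inv_subset_gen_inv_12 gen_inv_1_subset_weighted_inv_iff
      gen_inv_12_subset_weighted_inv_iff weighted_inv_subset_gen_inv_13_iff
      weighted_inv_subset_gen_inv_14_iff weighted_inv_Int_gen_inv moore_penrose_mem_weighted_inv_iff
      gen_inv_124_subset_weighted_inv_iff gen_inv_14_subset_weighted_inv_iff
      weighted_inv_subset_gen_inv_134_iff) auto
qed

end
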